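(* For all ordered graphs $G$ and $H$ there exists an integer $N_{G,H}$ such that $r_o(G,H)=r_o(G,H;N_{G,H})$.
   Context: An ordered graph $G$ on $n$ vertices has vertex set $[n]=\{1,\dots,n\}$ with the natural linear order. An ordered graph $G$ on $[n]$ is contained in an ordered graph $H$ on a linearly ordered vertex set if there is an injective map $f$ from $[n]$ to $V(H)$ with $f(i)<f(j)$ whenever $i<j$ and $f(i)f(j)\in E(H)$ whenever $ij\in E(G)$; such an image is an ordered copy of $G$. The ordered Ramsey number $r_<(G,H)$ is the least $N$ such that every red/blue coloring of the edges of the complete graph on $[N]$ contains an ordered red copy of $G$ or an ordered blue copy of $H$. The online ordered Ramsey game for $(G_1,G_2)$ is played by Builder and Painter on a linearly ordered vertex set. On each turn Builder selects a previously unselected pair of vertices (an edge) and Painter then colors it red or blue. Builder wins as soon as the colored edges contain an ordered red copy of $G_1$ or an ordered blue copy of $G_2$; Builder tries to minimize and Painter tries to maximize the number of turns. The online ordered Ramsey number $r_o(G_1,G_2)$ is the number of turns after which Builder wins under optimal play when the game is played on $\mathbb N$. For $N\ge r_<(G_1,G_2)$, the restricted number $r_o(G_1,G_2;N)$ is the number of turns after which Builder wins under optimal play when the game is played on the vertex set $[N]$. *)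

theory Defs
  imports Main
begin

text \<open>An ordered graph on [n] = {1..n}: a pair (n, E) where E is a set of pairs (i,j)
  with 1 \<le> i < j \<le> n (the edge ij of G, written with its smaller endpoint first).\<close>
type_synonym ograph = "nat \<times> (nat \<times> nat) set"

definition ograph :: "ograph \<Rightarrow> bool" where
  "ograph G \<longleftrightarrow> (\<forall>(i,j)\<in>snd G. 1 \<le> i \<and> i < j \<and> j \<le> fst G)"

text \<open>A partial red/blue colouring of pairs of natural numbers: c (u,v) for u < v is
  None (uncoloured), Some True (red) or Some False (blue).\<close>
type_synonym colouring = "nat \<times> nat \<Rightarrow> bool option"

definition has_copy :: "nat set \<Rightarrow> colouring \<Rightarrow> bool \<Rightarrow> ograph \<Rightarrow> bool" where
  "has_copy V c b G \<longleftrightarrow>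
     (\<exists>f. strict_mono_on {1..fst G} f \<and> f ` {1..fst G} \<subseteq> V \<and>
          (\<forall>(i,j)\<in>snd G. c (f i, f j) = Some b))"

definition builder_won :: "nat set \<Rightarrow> ograph \<Rightarrow> ograph \<Rightarrow> colouring \<Rightarrow> bool" where
  "builder_won V G1 G2 c \<longleftrightarrow> has_copy V c True G1 \<or> has_copy V c False G2"

primrec builder_wins_within :: "nat set \<Rightarrow> ograph \<Rightarrow> ograph \<Rightarrow> nat \<Rightarrow> colouring \<Rightarrow> bool" where
  "builder_wins_within V G1 G2 0 c = builder_won V G1 G2 c"
| "builder_wins_within V G1 G2 (Suc k) c =
     (builder_won V G1 G2 c \<or>
      (\<exists>u v. u \<in> V \<and> v \<in> V \<and> u < v \<and> c (u,v) = None \<and>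
         (\<forall>b. builder_wins_within V G1 G2 k (c((u,v) := Some b)))))"

definition online_value :: "nat set \<Rightarrow> ograph \<Rightarrow> ograph \<Rightarrow> nat" where
  "online_value V G1 G2 = (LEAST k. builder_wins_within V G1 G2 k (\<lambda>_. None))"

definition r_o :: "ograph \<Rightarrow> ograph \<Rightarrow> nat" where
  "r_o G1 G2 = online_value {1..} G1 G2"

definition r_o_restr :: "ograph \<Rightarrow> ograph \<Rightarrow> nat \<Rightarrow> nat" where
  "r_o_restr G1 G2 N = online_value {1..N} G1 G2"

definition r_ord :: "ograph \<Rightarrow> ograph \<Rightarrow> nat" where
  "r_ord G1 G2 = (LEAST N. \<forall>col :: nat \<Rightarrow> nat \<Rightarrow> bool.
      builder_won {1..N} G1 G2 (\<lambda>(u,v). Some (col u v)))"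

end

theory Submission
  imports Defs
begin

text \<open>A win of Builder is a finite object: a strategy of depth k touches finitely many vertices
  (the two vertices of each move, and the vertices of the copies found at the leaves). Hence a
  win on \<open>\<nat>\<close> within k turns is already a win on some \<open>[M]\<close>, and since enlarging the vertex set
  only helps Builder, the game value on \<open>[N]\<close> equals \<open>r_o\<close> for every \<open>N \<ge> M\<close>.\<close>

lemma has_copy_mono: "has_copy V c b G \<Longrightarrow> V \<subseteq> W \<Longrightarrow> has_copy W c b G"
  unfolding has_copy_def by blast

lemma builder_won_mono: "builder_won V G1 G2 c \<Longrightarrow> V \<subseteq> W \<Longrightarrow> builder_won W G1 G2 c"
  unfolding builder_won_def using has_copy_mono by blast

lemma builder_wins_within_mono:
  "builder_wins_within V G1 G2 k c \<Longrightarrow> V \<subseteq> W \<Longrightarrow> builder_wins_within W G1 G2 k c"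
proof (induction k arbitrary: c)
  case 0
  then show ?case using builder_won_mono by simp
next
  case (Suc k)
  then show ?case using builder_won_mono by simp blast
qed

lemma has_copy_finite_subset:
  assumes "has_copy V c b G"
  shows "\<exists>F\<subseteq>V. finite F \<and> has_copy F c b G"
proof -
  obtain f where "strict_mono_on {1..fst G} f" "f ` {1..fst G} \<subseteq> V"
      "\<forall>(i,j)\<in>snd G. c (f i, f j) = Some b"
    using assms unfolding has_copy_def by blast
  then have "has_copy (f ` {1..fst G}) c b G"
    unfolding has_copy_def by blast
  with \<open>f ` {1..fst G} \<subseteq> V\<close> show ?thesis by blast
qed

lemma builder_won_finite_subset:
  "builder_won V G1 G2 c \<Longrightarrow> \<exists>F\<subseteq>V. finite F \<and> builder_won F G1 G2 c"
  unfolding builder_won_def by (metis has_copy_finite_subset)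

lemma builder_wins_within_finite_subset:
  "builder_wins_within V G1 G2 k c \<Longrightarrow> \<exists>F\<subseteq>V. finite F \<and> builder_wins_within F G1 G2 k c"
proof (induction k arbitrary: c)
  case 0
  then show ?case using builder_won_finite_subset by simp
next
  case (Suc k)
  show ?case
  proof (cases "builder_won V G1 G2 c")
    case True
    then obtain F where "F \<subseteq> V" "finite F" "builder_won F G1 G2 c"
      using builder_won_finite_subset by meson
    then show ?thesis by auto
  next
    case False
    then obtain u v where uv: "u \<in> V" "v \<in> V" "u < v" "c (u,v) = None"
      and wins: "\<And>b. builder_wins_within V G1 G2 k (c((u,v) := Some b))"
      using Suc.prems by (auto simp del: builder_wins_within.simps(1))
    obtain F\<^sub>r where
      F\<^sub>r: "F\<^sub>r \<subseteq> V" "finite F\<^sub>r" "builder_wins_within F\<^sub>r G1 G2 k (c((u,v) := Some True))"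
      using Suc.IH[OF wins] by blast
    obtain F\<^sub>b where
      F\<^sub>b: "F\<^sub>b \<subseteq> V" "finite F\<^sub>b" "builder_wins_within F\<^sub>b G1 G2 k (c((u,v) := Some False))"
      using Suc.IH[OF wins] by blast
    define F where "F = F\<^sub>r \<union> F\<^sub>b \<union> {u, v}"
    have "F\<^sub>r \<subseteq> F" "F\<^sub>b \<subseteq> F"
      unfolding F_def by auto
    then have "builder_wins_within F G1 G2 k (c((u,v) := Some b))" for b
      using builder_wins_within_mono[OF F\<^sub>r(3)] builder_wins_within_mono[OF F\<^sub>b(3)]
      by (cases b) simp_all
    moreover have "u \<in> F" "v \<in> F"
      unfolding F_def by auto
    ultimately have "builder_wins_within F G1 G2 (Suc k) c"
      using uv(3,4) by (simp only: builder_wins_within.simps) blast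
    moreover have "F \<subseteq> V" "finite F"
      using F\<^sub>r F\<^sub>b uv unfolding F_def by auto
    ultimately show ?thesis by blast
  qed
qed

lemma builder_wins_within_initial_segment:
  assumes "builder_wins_within {1..} G1 G2 k c"
  obtains M where "builder_wins_within {1..M} G1 G2 k c"
proof -
  obtain F where F: "F \<subseteq> {1..}" "finite F" "builder_wins_within F G1 G2 k c"
    using builder_wins_within_finite_subset[OF assms] by blast
  then obtain M where "\<forall>x\<in>F. x \<le> M"
    using finite_nat_set_iff_bounded_le by blast
  with F(1) have "F \<subseteq> {1..M}" by auto
  with F(3) show ?thesis
    using that builder_wins_within_mono by blast
qed

text \<open>If Builder cannot win on \<open>\<nat>\<close> at all, both values are the same junk value
  \<open>LEAST k. False\<close>.\<close>

lemma online_value_initial_segment_stable: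
  "\<exists>M. \<forall>N\<ge>M. online_value {1..N} G1 G2 = online_value {1..} G1 G2"
proof (cases "\<exists>k. builder_wins_within {1..} G1 G2 k (\<lambda>_. None)")
  case True
  define k\<^sub>0 where "k\<^sub>0 = online_value {1..} G1 G2"
  have "builder_wins_within {1..} G1 G2 k\<^sub>0 (\<lambda>_. None)"
    unfolding k\<^sub>0_def online_value_def using True by (rule LeastI_ex)
  then obtain M where M: "builder_wins_within {1..M} G1 G2 k\<^sub>0 (\<lambda>_. None)"
    using builder_wins_within_initial_segment by blast
  have "online_value {1..N} G1 G2 = k\<^sub>0" if "M \<le> N" for N
  proof (rule antisym)
    have wins_N: "builder_wins_within {1..N} G1 G2 k\<^sub>0 (\<lambda>_. None)"
      using builder_wins_within_mono[OF M] \<open>M \<le> N\<close> by auto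
    then show "online_value {1..N} G1 G2 \<le> k\<^sub>0"
      unfolding online_value_def by (rule Least_le)
    have "builder_wins_within {1..N} G1 G2 (online_value {1..N} G1 G2) (\<lambda>_. None)"
      unfolding online_value_def using wins_N by (rule LeastI)
    then have "builder_wins_within {1..} G1 G2 (online_value {1..N} G1 G2) (\<lambda>_. None)"
      by (rule builder_wins_within_mono) auto
    then show "k\<^sub>0 \<le> online_value {1..N} G1 G2"
      unfolding k\<^sub>0_def online_value_def by (rule Least_le)
  qed
  then show ?thesis unfolding k\<^sub>0_def by blast
next
  case False
  then have "\<not> builder_wins_within {1..N} G1 G2 k (\<lambda>_. None)" for N k
    using builder_wins_within_mono[of "{1..N}" G1 G2 k _ "{1..}"] by auto
  with False show ?thesis
    unfolding online_value_def by simp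
qed

theorem lemma7:
  assumes "ograph G" and "ograph H"
  shows "\<exists>N. r_ord G H \<le> N \<and> r_o G H = r_o_restr G H N"
proof -
  obtain M where "\<forall>N\<ge>M. online_value {1..N} G H = online_value {1..} G H"
    using online_value_initial_segment_stable by blast
  then have "r_o G H = r_o_restr G H (max M (r_ord G H))"
    unfolding r_o_def r_o_restr_def by simp
  then show ?thesis by (intro exI[of _ "max M (r_ord G H)"]) simp
qed

end
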